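(* The comodule configuration $u:\mathbb B_{\bullet,0}\to\mathbf I$ is complete: defining $t_{\top+1}:\mathbb B_{i,j}\to\mathbb B_{i+1,j}$ by moving the discrete part of the bottom layer of the poset (the elements of the first poset layer comparable to no other element of $P$) into a new top layer of the set, the maps $t_{\top+1}$ are sections of the top vertical face maps $e_\top=e_{i+1}:\mathbb B_{i+1,j}\to\mathbb B_{i,j}$ and are monomorphisms of groupoids; they provide a left pointing.
   Context: For $n\ge0$, $\underline n=\{1,\dots,n\}$. $\mathbf I$ is the simplicial groupoid of layered finite sets ($\mathbf I_n$: maps $S\to\underline n$, $S$ a finite set). For $i,j\ge0$, $\mathbb B_{i,j}$ is the groupoid of pairs $(a:S\to\underline i,\ b:P\to\underline{j+1})$ with $S$ a finite set and $P$ a finite poset with monotone layering $b$, morphisms pairs of isomorphisms over the layerings. Vertical maps: $e_0:\mathbb B_{i,j}\to\mathbb B_{i-1,j}$ deletes the first set layer, $e_k$ ($0<k<i$) joins set layers $k,k+1$, and the top face map $e_i$ removes the last set layer and adds its elements, discretely ordered and incomparable with all of $P$, to the first poset layer; $t_k$ inserts an empty $(k+1)$st set layer. The augmentation $u:\mathbb B_{i,0}\to\mathbf I_i$ deletes the poset. A comodule configuration is a culf map from a Segal groupoid to a decomposition space; it is left pointed if equipped with extra top degeneracy maps $t_{\top+1}$ that are sections of the top face maps $e_\top$, and complete if these are monomorphisms (maps of groupoids whose homotopy fibres are empty or contractible). *)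

theory Defs
  imports Main "HOL-Library.FuncSet"
begin

text \<open>Elements of the finite set S and of the finite
poset P are taken from a common type 'a (required disjoint), so that elements can be moved
between the set part and the poset part.\<close>

record 'a bobj =
  Sset :: "'a set"
  slay :: "'a \<Rightarrow> nat"
  Pset :: "'a set"
  pord :: "'a rel"
  play :: "'a \<Rightarrow> nat"

definition carr :: "'a bobj \<Rightarrow> 'a set" where
  "carr X = Sset X \<union> Pset X"

definition Bobj :: "nat \<Rightarrow> nat \<Rightarrow> 'a bobj \<Rightarrow> bool" where
  "Bobj i j X \<longleftrightarrow>
     finite (Sset X) \<and> finite (Pset X) \<and> Sset X \<inter> Pset X = {} \<and>
     slay X \<in> extensional (Sset X) \<and> (\<forall>x\<in>Sset X. slay X x \<in> {1..i}) \<and>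
     play X \<in> extensional (Pset X) \<and> (\<forall>x\<in>Pset X. play X x \<in> {1..Suc j}) \<and>
     pord X \<subseteq> Pset X \<times> Pset X \<and> partial_order_on (Pset X) (pord X) \<and>
     (\<forall>x y. (x, y) \<in> pord X \<longrightarrow> play X x \<le> play X y)"

text \<open>Morphisms X \<rightarrow> Y: pairs of bijections over the layerings (the poset one an order
isomorphism), packaged as a single extensional function on S \<union> P.\<close>

definition Hom :: "'a bobj \<Rightarrow> 'a bobj \<Rightarrow> ('a \<Rightarrow> 'a) set" where
  "Hom X Y = {\<phi>. \<phi> \<in> extensional (carr X) \<and>
     bij_betw \<phi> (Sset X) (Sset Y) \<and> (\<forall>x\<in>Sset X. slay Y (\<phi> x) = slay X x) \<and>
     bij_betw \<phi> (Pset X) (Pset Y) \<and> (\<forall>x\<in>Pset X. play Y (\<phi> x) = play X x) \<and>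
     (\<forall>x\<in>Pset X. \<forall>y\<in>Pset X. (x, y) \<in> pord X \<longleftrightarrow> (\<phi> x, \<phi> y) \<in> pord Y)}"

definition gid :: "'a bobj \<Rightarrow> 'a \<Rightarrow> 'a" where
  "gid X = restrict id (carr X)"

definition gcomp :: "'a bobj \<Rightarrow> ('a \<Rightarrow> 'a) \<Rightarrow> ('a \<Rightarrow> 'a) \<Rightarrow> 'a \<Rightarrow> 'a" where
  "gcomp X \<psi> \<phi> = compose (carr X) \<psi> \<phi>"

definition discr :: "'a bobj \<Rightarrow> 'a set" where
  "discr X = {x \<in> Pset X. play X x = 1 \<and>
      (\<forall>y\<in>Pset X. y \<noteq> x \<longrightarrow> (x, y) \<notin> pord X \<and> (y, x) \<notin> pord X)}"

definition tobj :: "nat \<Rightarrow> 'a bobj \<Rightarrow> 'a bobj" where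
  "tobj i X = (let D = discr X; P' = Pset X - D in
     \<lparr> Sset = Sset X \<union> D,
       slay = (\<lambda>x. if x \<in> Sset X then slay X x else if x \<in> D then Suc i else undefined),
       Pset = P',
       pord = pord X \<inter> (P' \<times> P'),
       play = restrict (play X) P' \<rparr>)"

definition tmor :: "('a \<Rightarrow> 'a) \<Rightarrow> 'a \<Rightarrow> 'a" where
  "tmor \<phi> = \<phi>"

definition etop :: "nat \<Rightarrow> 'a bobj \<Rightarrow> 'a bobj" where
  "etop k X = (let L = {x \<in> Sset X. slay X x = k}; S' = Sset X - L in
     \<lparr> Sset = S',
       slay = restrict (slay X) S',
       Pset = Pset X \<union> L,
       pord = pord X \<union> Id_on L,
       play = (\<lambda>x. if x \<in> Pset X then play X x else if x \<in> L then 1 else undefined) \<rparr>)"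

definition emor :: "('a \<Rightarrow> 'a) \<Rightarrow> 'a \<Rightarrow> 'a" where
  "emor \<phi> = \<phi>"

end

theory Submission
  imports Defs
begin

text \<open>The discrete part of the bottom poset layer is defined order-theoretically, so every
isomorphism maps it onto the discrete part of its target; hence \<open>t\<close>, which moves it into a new
top set layer, is a functor acting as the identity on underlying bijections. The top face map
\<open>e\<close> puts exactly that layer back as discrete elements of poset layer 1, so \<open>e (t X) = X\<close>. As
\<open>e\<close> is also a functor acting trivially on bijections, \<open>Hom (t X) (t Y)\<close> lies between
\<open>Hom X Y\<close> and \<open>Hom (e (t X)) (e (t Y)) = Hom X Y\<close>: the section \<open>t\<close> is fully faithful and
injective on objects, i.e. a monomorphism.\<close>

lemma discr_subset: "discr X \<subseteq> Pset X"
  by (auto simp: discr_def)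

lemma tobj_simps [simp]:
  "Sset (tobj i X) = Sset X \<union> discr X"
  "slay (tobj i X) = (\<lambda>x. if x \<in> Sset X then slay X x else if x \<in> discr X then Suc i else undefined)"
  "Pset (tobj i X) = Pset X - discr X"
  "pord (tobj i X) = pord X \<inter> (Pset X - discr X) \<times> (Pset X - discr X)"
  "play (tobj i X) = restrict (play X) (Pset X - discr X)"
  by (simp_all add: tobj_def Let_def)

lemma carr_tobj [simp]: "carr (tobj i X) = carr X"
  using discr_subset[of X] by (auto simp: carr_def)

lemma etop_simps [simp]:
  "Sset (etop k X) = Sset X - {x \<in> Sset X. slay X x = k}"
  "slay (etop k X) = restrict (slay X) (Sset X - {x \<in> Sset X. slay X x = k})"
  "Pset (etop k X) = Pset X \<union> {x \<in> Sset X. slay X x = k}"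
  "pord (etop k X) = pord X \<union> Id_on {x \<in> Sset X. slay X x = k}"
  "play (etop k X) = (\<lambda>x. if x \<in> Pset X then play X x
      else if x \<in> {x \<in> Sset X. slay X x = k} then 1 else undefined)"
  by (simp_all add: etop_def Let_def)

lemma carr_etop [simp]: "carr (etop k X) = carr X"
  by (auto simp: carr_def)

lemma Bobj_disjoint: "Bobj i j X \<Longrightarrow> Sset X \<inter> Pset X = {}"
  by (simp add: Bobj_def)

lemma Bobj_pord_subset: "Bobj i j X \<Longrightarrow> pord X \<subseteq> Pset X \<times> Pset X"
  by (simp add: Bobj_def)

lemma Bobj_pord_refl: "Bobj i j X \<Longrightarrow> x \<in> Pset X \<Longrightarrow> (x, x) \<in> pord X"
  unfolding Bobj_def partial_order_on_def preorder_on_def refl_on_def by auto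

lemma pord_eq_tobj_Un_discr:
  assumes "Bobj i j X"
  shows "pord X = pord (tobj i X) \<union> Id_on (discr X)"
proof -
  have "(x, y) \<in> pord X \<Longrightarrow> x \<in> discr X \<or> y \<in> discr X \<Longrightarrow> x = y" for x y
    using Bobj_pord_subset[OF assms] by (auto simp: discr_def)
  then show ?thesis
    using Bobj_pord_subset[OF assms] Bobj_pord_refl[OF assms] discr_subset[of X] by auto
qed

lemma Hom_discr_iff:
  assumes "\<phi> \<in> Hom X Y" "x \<in> Pset X"
  shows "\<phi> x \<in> discr Y \<longleftrightarrow> x \<in> discr X"
proof -
  have bij: "bij_betw \<phi> (Pset X) (Pset Y)" and play: "\<forall>x\<in>Pset X. play Y (\<phi> x) = play X x"
    and pord: "\<forall>x\<in>Pset X. \<forall>y\<in>Pset X. (x, y) \<in> pord X \<longleftrightarrow> (\<phi> x, \<phi> y) \<in> pord Y"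
    using assms(1) by (auto simp: Hom_def)
  have ball: "(\<forall>z\<in>Pset Y. P z) \<longleftrightarrow> (\<forall>y\<in>Pset X. P (\<phi> y))" for P
    using bij by (rule bij_betw_ball)
  have "\<phi> y = \<phi> x \<longleftrightarrow> y = x" if "y \<in> Pset X" for y
    using bij that assms(2) by (auto simp: bij_betw_def inj_on_def)
  then show ?thesis
    using assms(2) bij play pord by (auto simp: discr_def ball bij_betw_apply)
qed

lemma Hom_image_discr:
  assumes "\<phi> \<in> Hom X Y"
  shows "\<phi> ` discr X = discr Y"
proof -
  have "\<phi> ` Pset X = Pset Y"
    using assms by (auto simp: Hom_def bij_betw_def)
  then show ?thesis
    using Hom_discr_iff[OF assms] discr_subset[of X] discr_subset[of Y] by (auto 0 3)
qed

lemma Hom_tobj: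
  assumes X: "Bobj i j X" and Y: "Bobj i j Y" and \<phi>: "\<phi> \<in> Hom X Y"
  shows "\<phi> \<in> Hom (tobj i X) (tobj i Y)"
proof -
  have bS: "bij_betw \<phi> (Sset X) (Sset Y)" and slay: "\<forall>x\<in>Sset X. slay Y (\<phi> x) = slay X x"
    and bP: "bij_betw \<phi> (Pset X) (Pset Y)" and play: "\<forall>x\<in>Pset X. play Y (\<phi> x) = play X x"
    and pord: "\<forall>x\<in>Pset X. \<forall>y\<in>Pset X. (x, y) \<in> pord X \<longleftrightarrow> (\<phi> x, \<phi> y) \<in> pord Y"
    using \<phi> by (auto simp: Hom_def)
  have bD: "bij_betw \<phi> (discr X) (discr Y)"
    using bij_betw_subset[OF bP discr_subset Hom_image_discr[OF \<phi>]] .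
  have bPD: "bij_betw \<phi> (Pset X - discr X) (Pset Y - discr Y)"
    using bij_betw_DiffI[OF bP bD discr_subset discr_subset] .
  have disj: "Sset Y \<inter> discr Y = {}" "Sset X \<inter> discr X = {}"
    using Bobj_disjoint[OF X] Bobj_disjoint[OF Y] discr_subset[of X] discr_subset[of Y] by blast+
  have S_to: "\<phi> x \<in> Sset Y" if "x \<in> Sset X" for x
    using bS that by (rule bij_betw_apply)
  have D_to: "\<phi> x \<in> discr Y" if "x \<in> discr X" for x
    using bD that by (rule bij_betw_apply)
  have PD_to: "\<phi> x \<in> Pset Y - discr Y" if "x \<in> Pset X - discr X" for x
    using bPD that by (rule bij_betw_apply)
  show ?thesis
    unfolding Hom_def carr_tobj tobj_simps
  proof (intro CollectI conjI ballI)
    show "\<phi> \<in> extensional (carr X)"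
      using \<phi> by (simp add: Hom_def)
    show "bij_betw \<phi> (Sset X \<union> discr X) (Sset Y \<union> discr Y)"
      using bS bD disj(1) by (rule bij_betw_combine)
  next
    fix x assume "x \<in> Sset X \<union> discr X"
    then show "(if \<phi> x \<in> Sset Y then slay Y (\<phi> x) else if \<phi> x \<in> discr Y then Suc i else undefined) =
      (if x \<in> Sset X then slay X x else if x \<in> discr X then Suc i else undefined)"
      using S_to D_to slay disj by auto
  next
    show "bij_betw \<phi> (Pset X - discr X) (Pset Y - discr Y)" by (fact bPD)
  next
    fix x assume "x \<in> Pset X - discr X"
    then show "restrict (play Y) (Pset Y - discr Y) (\<phi> x) = restrict (play X) (Pset X - discr X) x"
      using PD_to play by simp
  next
    fix x y assume "x \<in> Pset X - discr X" "y \<in> Pset X - discr X"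
    then show "(x, y) \<in> pord X \<inter> (Pset X - discr X) \<times> (Pset X - discr X) \<longleftrightarrow>
      (\<phi> x, \<phi> y) \<in> pord Y \<inter> (Pset Y - discr Y) \<times> (Pset Y - discr Y)"
      using PD_to pord by simp
  qed
qed

lemma Hom_etop:
  assumes X: "Bobj i j X" and Y: "Bobj i j Y" and \<phi>: "\<phi> \<in> Hom X Y"
  shows "\<phi> \<in> Hom (etop k X) (etop k Y)"
proof -
  define LX LY where "LX = {x \<in> Sset X. slay X x = k}" and "LY = {y \<in> Sset Y. slay Y y = k}"
  have bS: "bij_betw \<phi> (Sset X) (Sset Y)" and slay: "\<forall>x\<in>Sset X. slay Y (\<phi> x) = slay X x"
    and bP: "bij_betw \<phi> (Pset X) (Pset Y)" and play: "\<forall>x\<in>Pset X. play Y (\<phi> x) = play X x"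
    and pord: "\<forall>x\<in>Pset X. \<forall>y\<in>Pset X. (x, y) \<in> pord X \<longleftrightarrow> (\<phi> x, \<phi> y) \<in> pord Y"
    using \<phi> by (auto simp: Hom_def)
  have LX_sub: "LX \<subseteq> Sset X" and LY_sub: "LY \<subseteq> Sset Y"
    by (auto simp: LX_def LY_def)
  have "\<phi> ` LX = LY"
  proof -
    have "\<phi> ` Sset X = Sset Y"
      using bS by (rule bij_betw_imp_surj_on)
    then show ?thesis
      using slay unfolding LX_def LY_def by (auto 0 3)
  qed
  then have bL: "bij_betw \<phi> LX LY"
    using bij_betw_subset[OF bS LX_sub] by blast
  have bSL: "bij_betw \<phi> (Sset X - LX) (Sset Y - LY)"
    using bS bL LX_sub LY_sub by (rule bij_betw_DiffI)
  have disj: "Pset Y \<inter> LY = {}" "Pset X \<inter> LX = {}"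
    using Bobj_disjoint[OF X] Bobj_disjoint[OF Y] LX_sub LY_sub by blast+
  have bPL: "bij_betw \<phi> (Pset X \<union> LX) (Pset Y \<union> LY)"
    using bP bL disj(1) by (rule bij_betw_combine)
  have inj: "inj_on \<phi> (Pset X \<union> LX)"
    using bPL by (rule bij_betw_imp_inj_on)
  have P_to: "\<phi> x \<in> Pset Y" if "x \<in> Pset X" for x
    using bP that by (rule bij_betw_apply)
  have L_to: "\<phi> x \<in> LY" if "x \<in> LX" for x
    using bL that by (rule bij_betw_apply)
  have SL_to: "\<phi> x \<in> Sset Y - LY" if "x \<in> Sset X - LX" for x
    using bSL that by (rule bij_betw_apply)
  show ?thesis
    unfolding Hom_def carr_etop etop_simps LX_def[symmetric] LY_def[symmetric]
  proof (intro CollectI conjI ballI)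
    show "\<phi> \<in> extensional (carr X)"
      using \<phi> by (simp add: Hom_def)
  next
    fix x assume "x \<in> Sset X - LX"
    then show "restrict (slay Y) (Sset Y - LY) (\<phi> x) = restrict (slay X) (Sset X - LX) x"
      using SL_to slay by simp
  next
    fix x assume "x \<in> Pset X \<union> LX"
    then show "(if \<phi> x \<in> Pset Y then play Y (\<phi> x) else if \<phi> x \<in> LY then 1 else undefined) =
      (if x \<in> Pset X then play X x else if x \<in> LX then 1 else undefined)"
      using P_to L_to play disj by auto
  next
    fix x y assume xy: "x \<in> Pset X \<union> LX" "y \<in> Pset X \<union> LX"
    have "\<phi> x = \<phi> y \<longleftrightarrow> x = y"
      using inj xy by (auto dest: inj_onD)
    then show "(x, y) \<in> pord X \<union> Id_on LX \<longleftrightarrow> (\<phi> x, \<phi> y) \<in> pord Y \<union> Id_on LY"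
      using xy P_to L_to pord disj Bobj_pord_subset[OF X] Bobj_pord_subset[OF Y]
      by (auto simp: disjoint_iff)
  qed (fact bSL bPL)+
qed

lemma Bobj_tobj:
  assumes "Bobj i j X"
  shows "Bobj (Suc i) j (tobj i X)"
proof -
  let ?P = "Pset X - discr X"
  have "partial_order_on ?P (pord X \<inter> ?P \<times> ?P)"
    using assms unfolding Bobj_def partial_order_on_def preorder_on_def refl_on_def trans_def antisym_def
    by blast
  moreover have "finite (discr X)"
    using assms by (auto simp: Bobj_def intro: finite_subset[OF discr_subset])
  ultimately show ?thesis
    using assms discr_subset[of X] unfolding Bobj_def tobj_simps
    by (auto simp: extensional_def)
qed

lemma play_discr: "x \<in> discr X \<Longrightarrow> play X x = 1"
  by (simp add: discr_def)

lemma top_layer_tobj: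
  assumes "Bobj i j X"
  shows "{x \<in> Sset (tobj i X). slay (tobj i X) x = Suc i} = discr X"
  using assms Bobj_disjoint[OF assms] discr_subset[of X] by (force simp: Bobj_def)

lemma etop_tobj:
  assumes X: "Bobj i j X"
  shows "etop (Suc i) (tobj i X) = X"
proof (rule bobj.equality)
  have S: "Sset X \<union> discr X - discr X = Sset X"
    using Bobj_disjoint[OF X] discr_subset[of X] by auto
  note etop_tobj_simps = etop_simps top_layer_tobj[OF X]
  show "Sset (etop (Suc i) (tobj i X)) = Sset X"
    unfolding etop_tobj_simps using S by simp
  show "slay (etop (Suc i) (tobj i X)) = slay X"
    unfolding etop_tobj_simps using X S by (auto simp: Bobj_def extensional_def)
  show "Pset (etop (Suc i) (tobj i X)) = Pset X"
    unfolding etop_tobj_simps using discr_subset[of X] by auto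
  show "pord (etop (Suc i) (tobj i X)) = pord X"
    unfolding etop_tobj_simps by (rule pord_eq_tobj_Un_discr[OF X, symmetric])
  show "play (etop (Suc i) (tobj i X)) = play X"
    unfolding etop_tobj_simps using X by (auto simp: Bobj_def extensional_def play_discr)
qed simp

lemma Hom_tobj_eq:
  assumes "Bobj i j X" "Bobj i j Y"
  shows "Hom (tobj i X) (tobj i Y) = Hom X Y"
proof
  show "Hom X Y \<subseteq> Hom (tobj i X) (tobj i Y)"
    using Hom_tobj[OF assms] by blast
  show "Hom (tobj i X) (tobj i Y) \<subseteq> Hom X Y"
  proof
    fix \<phi> assume "\<phi> \<in> Hom (tobj i X) (tobj i Y)"
    then have "\<phi> \<in> Hom (etop (Suc i) (tobj i X)) (etop (Suc i) (tobj i Y))"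
      by (rule Hom_etop[OF Bobj_tobj[OF assms(1)] Bobj_tobj[OF assms(2)]])
    then show "\<phi> \<in> Hom X Y"
      by (simp only: etop_tobj[OF assms(1)] etop_tobj[OF assms(2)])
  qed
qed

theorem lemma3p2:
  fixes i j :: nat
  shows
    "(\<forall>X::'a bobj. Bobj i j X \<longrightarrow> Bobj (Suc i) j (tobj i X))
   \<and> (\<forall>X::'a bobj. Bobj i j X \<longrightarrow> tmor (gid X) = gid (tobj i X))
   \<and> (\<forall>(X::'a bobj) Y Z \<phi> \<psi>. Bobj i j X \<and> Bobj i j Y \<and> Bobj i j Z \<and>
         \<phi> \<in> Hom X Y \<and> \<psi> \<in> Hom Y Z \<longrightarrow>
         tmor (gcomp X \<psi> \<phi>) = gcomp (tobj i X) (tmor \<psi>) (tmor \<phi>))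
   \<and> (\<forall>X::'a bobj. Bobj i j X \<longrightarrow> etop (Suc i) (tobj i X) = X)
   \<and> (\<forall>(X::'a bobj) Y \<phi>. Bobj i j X \<and> Bobj i j Y \<and> \<phi> \<in> Hom X Y \<longrightarrow> emor (tmor \<phi>) = \<phi>)
   \<and> (\<forall>(X::'a bobj) Y. Bobj i j X \<and> Bobj i j Y \<longrightarrow>
         bij_betw tmor (Hom X Y) (Hom (tobj i X) (tobj i Y)))"
proof (intro conjI allI impI)
  fix X :: "'a bobj"
  assume "Bobj i j X"
  then show "Bobj (Suc i) j (tobj i X)" and "etop (Suc i) (tobj i X) = X"
    by (rule Bobj_tobj, rule etop_tobj)
next
  fix X Y :: "'a bobj"
  assume "Bobj i j X \<and> Bobj i j Y"
  then have "Hom (tobj i X) (tobj i Y) = Hom X Y"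
    by (simp add: Hom_tobj_eq[of i j])
  moreover have "tmor = id"
    by (rule ext) (simp add: tmor_def)
  ultimately show "bij_betw tmor (Hom X Y) (Hom (tobj i X) (tobj i Y))"
    by (metis bij_betw_id)
qed (simp_all add: tmor_def emor_def gid_def gcomp_def)

end
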